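(* Let $P,Q\in\mathbb P_d$ and $R=\gamma^{\mathrm{AI}}_{P^{-1}Q^{-1}}(t)$ for some $t\in[0,1]$. Then $\operatorname{F}_R(P,Q)=\operatorname{F}^{\mathrm M}(P,Q)$.
   Context: $\mathbb P_d$ is the set of $d\times d$ complex positive definite matrices; $A\#B:=A^{1/2}(A^{-1/2}BA^{-1/2})^{1/2}A^{1/2}$. The affine-invariant geodesic between $A,B\in\mathbb P_d$ is $\gamma^{\mathrm{AI}}_{AB}(t):=A^{1/2}(A^{-1/2}BA^{-1/2})^tA^{1/2}$, $t\in[0,1]$; thus $\gamma^{\mathrm{AI}}_{P^{-1}Q^{-1}}(t)=P^{-1/2}(P^{1/2}Q^{-1}P^{1/2})^tP^{-1/2}$. The generalized fidelity is $\operatorname{F}_R(P,Q):=\operatorname{Tr}\big[\sqrt{R^{1/2}PR^{1/2}}\,R^{-1}\sqrt{R^{1/2}QR^{1/2}}\big]$, and the Matsumoto fidelity is $\operatorname{F}^{\mathrm M}(P,Q):=\operatorname{Tr}[P\#Q]$. *)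

theory Defs
  imports "Jordan_Normal_Form.Schur_Decomposition"
begin

definition mtrace :: "complex mat \<Rightarrow> complex" where
  "mtrace A = (\<Sum>i<dim_row A. A $$ (i, i))"

definition posdef :: "nat \<Rightarrow> complex mat \<Rightarrow> bool" where
  "posdef d A \<longleftrightarrow> A \<in> carrier_mat d d \<and> mat_adjoint A = A \<and>
     (\<forall>v \<in> carrier_vec d. v \<noteq> 0\<^sub>v d \<longrightarrow> 0 < Re (conjugate v \<bullet> (A *\<^sub>v v)))"

definition unitary_mat :: "nat \<Rightarrow> complex mat \<Rightarrow> bool" where
  "unitary_mat d U \<longleftrightarrow> U \<in> carrier_mat d d \<and> U * mat_adjoint U = 1\<^sub>m d \<and> mat_adjoint U * U = 1\<^sub>m d"

definition minv :: "complex mat \<Rightarrow> complex mat" where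
  "minv A = (THE B. B \<in> carrier_mat (dim_row A) (dim_row A) \<and>
                    A * B = 1\<^sub>m (dim_row A) \<and> B * A = 1\<^sub>m (dim_row A))"

definition mpow :: "complex mat \<Rightarrow> real \<Rightarrow> complex mat" where
  "mpow A t = (THE B. \<exists>U D. unitary_mat (dim_row A) U \<and>
       D \<in> carrier_mat (dim_row A) (dim_row A) \<and> diagonal_mat D \<and>
       (\<forall>i < dim_row A. Im (D $$ (i, i)) = 0 \<and> 0 < Re (D $$ (i, i))) \<and>
       A = U * D * mat_adjoint U \<and>
       B = U * mat (dim_row A) (dim_row A)
              (\<lambda>(i, j). if i = j then complex_of_real (Re (D $$ (i, i)) powr t) else 0)
           * mat_adjoint U)"

definition msqrt :: "complex mat \<Rightarrow> complex mat" where
  "msqrt A = mpow A (1/2)"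

definition mgeo_mean :: "complex mat \<Rightarrow> complex mat \<Rightarrow> complex mat" where
  "mgeo_mean A B = msqrt A * msqrt (mpow A (-1/2) * B * mpow A (-1/2)) * msqrt A"

definition ai_geodesic :: "complex mat \<Rightarrow> complex mat \<Rightarrow> real \<Rightarrow> complex mat" where
  "ai_geodesic A B t = msqrt A * mpow (mpow A (-1/2) * B * mpow A (-1/2)) t * msqrt A"

definition gen_fidelity :: "complex mat \<Rightarrow> complex mat \<Rightarrow> complex mat \<Rightarrow> complex" where
  "gen_fidelity R P Q = mtrace (msqrt (msqrt R * P * msqrt R) * minv R * msqrt (msqrt R * Q * msqrt R))"

definition matsumoto_fidelity :: "complex mat \<Rightarrow> complex mat \<Rightarrow> complex" where
  "matsumoto_fidelity P Q = mtrace (mgeo_mean P Q)"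

end

theory Submission
  imports Defs "Jordan_Normal_Form.Spectral_Radius"
begin

text \<open>
  Put \<open>C = P\<^sup>1\<^sup>/\<^sup>2 Q\<^sup>-\<^sup>1 P\<^sup>1\<^sup>/\<^sup>2\<close>. The point \<open>R\<close> of the geodesic is
  \<open>P\<^sup>-\<^sup>1\<^sup>/\<^sup>2 C\<^sup>t P\<^sup>-\<^sup>1\<^sup>/\<^sup>2 = S S\<^sup>*\<close> with \<open>S = P\<^sup>-\<^sup>1\<^sup>/\<^sup>2 C\<^sup>t\<^sup>/\<^sup>2\<close>.
  By polar decomposition \<open>R\<^sup>1\<^sup>/\<^sup>2 = S K\<^sup>* = K S\<^sup>*\<close> for a unitary \<open>K\<close>, so
  \<open>R\<^sup>1\<^sup>/\<^sup>2 X R\<^sup>1\<^sup>/\<^sup>2 = K (S\<^sup>* X S) K\<^sup>*\<close>, and unitary invariance of the trace gives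
  \<open>F\<^sub>R(P,Q) = Tr[(S\<^sup>*PS)\<^sup>1\<^sup>/\<^sup>2 (S\<^sup>*S)\<^sup>-\<^sup>1 (S\<^sup>*QS)\<^sup>1\<^sup>/\<^sup>2]\<close>.
  Now \<open>S\<^sup>*PS = C\<^sup>t\<close>, \<open>S\<^sup>*QS = C\<^sup>t\<^sup>-\<^sup>1\<close> and \<open>(S\<^sup>*S)\<^sup>-\<^sup>1 = C\<^sup>-\<^sup>t\<^sup>/\<^sup>2 P C\<^sup>-\<^sup>t\<^sup>/\<^sup>2\<close>,
  so the product collapses to \<open>P C\<^sup>-\<^sup>1\<^sup>/\<^sup>2\<close>, whose trace equals that of
  \<open>P # Q = P\<^sup>1\<^sup>/\<^sup>2 C\<^sup>-\<^sup>1\<^sup>/\<^sup>2 P\<^sup>1\<^sup>/\<^sup>2\<close>.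
  Matrix powers are computed from a unitary diagonalization, which exists by the spectral theorem
  for Hermitian matrices.
\<close>

lemma index_mult_mat_sum:
  assumes "i < dim_row A" "j < dim_col B" "dim_col A = dim_row B"
  shows "(A * B) $$ (i,j) = (\<Sum>k<dim_col A. A $$ (i,k) * B $$ (k,j))"
  using assms by (simp add: scalar_prod_def atLeast0LessThan)

declare index_mult_mat(1)[simp del]
declare index_mult_mat_sum[simp]

lemma mat_adjoint_dim[simp]: "dim_row (mat_adjoint A) = dim_col A" "dim_col (mat_adjoint A) = dim_row A"
  by (auto simp: mat_adjoint_def)

lemma index_mat_adjoint[simp]: "i < dim_col A \<Longrightarrow> j < dim_row A \<Longrightarrow> mat_adjoint A $$ (i,j) = cnj (A $$ (j,i))"
  by (simp add: mat_adjoint_def mat_of_rows_def)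

lemma mat_adjoint_carrier[simp]: "A \<in> carrier_mat n m \<Longrightarrow> mat_adjoint A \<in> carrier_mat m n"
  unfolding carrier_mat_def by simp

lemma mat_adjoint_adjoint[simp]: "mat_adjoint (mat_adjoint (A::complex mat)) = A"
  by (rule eq_matI; simp)

lemma mat_adjoint_mult:
  fixes A B :: "complex mat"
  assumes "dim_col A = dim_row B"
  shows "mat_adjoint (A * B) = mat_adjoint B * mat_adjoint A"
proof (rule eq_matI)
  fix i j assume "i < dim_row (mat_adjoint B * mat_adjoint A)" "j < dim_col (mat_adjoint B * mat_adjoint A)"
  then have i: "i < dim_col B" and j: "j < dim_row A" by auto
  have "mat_adjoint (A * B) $$ (i, j) = cnj (\<Sum>k<dim_col A. A $$ (j,k) * B $$ (k,i))"
    using i j assms by simp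
  also have "\<dots> = (\<Sum>k<dim_row B. mat_adjoint B $$ (i,k) * mat_adjoint A $$ (k,j))"
    unfolding cnj_sum complex_cnj_mult assms using i j assms by (simp add: mult.commute)
  also have "\<dots> = (mat_adjoint B * mat_adjoint A) $$ (i, j)"
    using i j assms by simp
  finally show "mat_adjoint (A * B) $$ (i, j) = (mat_adjoint B * mat_adjoint A) $$ (i, j)" .
qed simp_all

lemma mat_adjoint_one[simp]: "mat_adjoint (1\<^sub>m n :: complex mat) = 1\<^sub>m n"
  by (rule eq_matI; simp)

definition rdiag :: "nat \<Rightarrow> (nat \<Rightarrow> real) \<Rightarrow> complex mat" where
  "rdiag n f = mat n n (\<lambda>(i,j). if i = j then complex_of_real (f i) else 0)"

lemma rdiag_carrier[simp]: "rdiag n f \<in> carrier_mat n n" "dim_row (rdiag n f) = n" "dim_col (rdiag n f) = n"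
  by (simp_all add: rdiag_def)

lemma index_rdiag[simp]: "i < n \<Longrightarrow> j < n \<Longrightarrow> rdiag n f $$ (i,j) = (if i = j then complex_of_real (f i) else 0)"
  by (simp add: rdiag_def)

lemma index_mult_rdiag:
  "i < dim_row A \<Longrightarrow> j < n \<Longrightarrow> dim_col A = n \<Longrightarrow> (A * rdiag n f) $$ (i,j) = A $$ (i,j) * f j"
  by (simp add: if_distrib[where f="\<lambda>x. _ * x"] sum.delta cong: if_cong)

lemma index_rdiag_mult:
  "i < n \<Longrightarrow> j < dim_col A \<Longrightarrow> dim_row A = n \<Longrightarrow> (rdiag n f * A) $$ (i,j) = f i * A $$ (i,j)"
  by (simp add: if_distrib[where f="\<lambda>x. x * _"] sum.delta cong: if_cong)

lemma rdiag_mult_rdiag: "rdiag n f * rdiag n g = rdiag n (\<lambda>i. f i * g i)"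
  by (rule eq_matI; simp add: index_mult_rdiag del: index_mult_mat_sum)

lemma mat_adjoint_rdiag[simp]: "mat_adjoint (rdiag n f) = rdiag n f"
  by (rule eq_matI; simp)

lemma rdiag_one: "rdiag n (\<lambda>_. 1) = 1\<^sub>m n"
  by (rule eq_matI; simp)

lemma mult_mat_assoc_subst:
  fixes X Y Z W :: "'a :: semiring_0 mat"
  assumes "X \<in> carrier_mat n k" "Y \<in> carrier_mat k m" "Z \<in> carrier_mat m l" "X * Y = W"
  shows "X * (Y * Z) = W * Z"
  using assoc_mult_mat[OF assms(1-3)] assms(4) by simp

lemma mult_mat_inverse_cancel:
  fixes A B X :: "complex mat"
  assumes "A \<in> carrier_mat n n" "B \<in> carrier_mat n n" "X \<in> carrier_mat n m" "A * B = 1\<^sub>m n"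
  shows "A * (B * X) = X"
proof -
  have "(A * B) * X = A * (B * X)" by (rule assoc_mult_mat[OF assms(1-3)])
  thus ?thesis using assms(4) left_mult_one_mat[OF assms(3)] by simp
qed

lemma unitary_mat_mult:
  assumes U: "unitary_mat d U" and V: "unitary_mat d V"
  shows "unitary_mat d (U * V)"
proof -
  have Uc: "U \<in> carrier_mat d d" and Vc: "V \<in> carrier_mat d d" using U V by (simp_all add: unitary_mat_def)
  have UU: "U * mat_adjoint U = 1\<^sub>m d" "mat_adjoint U * U = 1\<^sub>m d"
   and VV: "V * mat_adjoint V = 1\<^sub>m d" "mat_adjoint V * V = 1\<^sub>m d" using U V by (simp_all add: unitary_mat_def)
  have adj: "mat_adjoint (U * V) = mat_adjoint V * mat_adjoint U" using Uc Vc by (simp add: mat_adjoint_mult)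
  have aU: "mat_adjoint U \<in> carrier_mat d d" and aV: "mat_adjoint V \<in> carrier_mat d d" using Uc Vc by simp_all
  note as = assoc_mult_mat[of _ d d _ d _ d]
  note mc = mult_carrier_mat[of _ d d _ d]
  have c1: "\<And>X. X \<in> carrier_mat d d \<Longrightarrow> V * (mat_adjoint V * X) = X"
    using mult_mat_inverse_cancel[OF Vc aV _ VV(1)] by blast
  have c2: "\<And>X. X \<in> carrier_mat d d \<Longrightarrow> mat_adjoint U * (U * X) = X"
    using mult_mat_inverse_cancel[OF aU Uc _ UU(2)] by blast
  have 1: "U * V * mat_adjoint (U * V) = 1\<^sub>m d" unfolding adj using Uc Vc aU aV
    by (simp add: as mc c1 UU)
  have 2: "mat_adjoint (U * V) * (U * V) = 1\<^sub>m d" unfolding adj using Uc Vc aU aV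
    by (simp add: as mc c2 VV)
  show ?thesis unfolding unitary_mat_def using 1 2 Uc Vc by simp
qed

lemma rdiag_cong: "(\<And>i. i < n \<Longrightarrow> f i = g i) \<Longrightarrow> rdiag n f = rdiag n g"
  by (rule eq_matI; simp)

lemma diag_eq_rdiag:
  assumes "D \<in> carrier_mat d d" "diagonal_mat D" "\<forall>i<d. Im (D $$ (i,i)) = 0"
  shows "D = rdiag d (\<lambda>i. Re (D $$ (i,i)))"
proof (rule eq_matI)
  fix i j assume "i < dim_row (rdiag d (\<lambda>i. Re (D $$ (i, i))))" "j < dim_col (rdiag d (\<lambda>i. Re (D $$ (i, i))))"
  then have ij: "i < d" "j < d" by simp_all
  show "D $$ (i, j) = rdiag d (\<lambda>i. Re (D $$ (i, i))) $$ (i, j)"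
  proof (cases "i = j")
    case True thus ?thesis using ij assms(3) by (simp add: complex_eq_iff)
  next
    case False thus ?thesis using ij assms(1,2) by (simp add: diagonal_mat_def)
  qed
qed (insert assms, simp_all)

lemma rdiag_intertwine_fun:
  assumes Wc: "W \<in> carrier_mat d d" and WD: "W * rdiag d f = rdiag d g * W"
  shows "W * rdiag d (\<lambda>i. \<phi> (f i)) = rdiag d (\<lambda>i. \<phi> (g i)) * W"
proof (rule eq_matI)
  fix i j assume "i < dim_row (rdiag d (\<lambda>i. \<phi> (g i)) * W)" "j < dim_col (rdiag d (\<lambda>i. \<phi> (g i)) * W)"
  then have ij: "i < d" "j < d" using Wc by simp_all
  have e: "W $$ (i,j) * f j = g i * W $$ (i,j)"
    using arg_cong[OF WD, of "\<lambda>M. M $$ (i,j)"] ij Wc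
    by (simp add: index_mult_rdiag index_rdiag_mult del: index_mult_mat_sum)
  have "W $$ (i,j) * \<phi> (f j) = \<phi> (g i) * W $$ (i,j)"
  proof (cases "W $$ (i,j) = 0")
    case False
    then have "f j = g i" using e by (simp add: mult.commute)
    then show ?thesis by (simp add: mult.commute)
  qed simp
  then show "(W * rdiag d (\<lambda>i. \<phi> (f i))) $$ (i, j) = (rdiag d (\<lambda>i. \<phi> (g i)) * W) $$ (i, j)"
    using ij Wc by (simp add: index_mult_rdiag index_rdiag_mult del: index_mult_mat_sum)
qed (insert Wc, simp_all)

text \<open>Applying a function to the eigenvalues does not depend on the chosen unitary
  diagonalization; this is what makes the definite description in \<open>mpow\<close> well defined.\<close>

lemma unitary_diag_fun_cong:
  assumes U: "unitary_mat d U" and V: "unitary_mat d V"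
  and eq: "U * rdiag d f * mat_adjoint U = V * rdiag d g * mat_adjoint V"
  shows "U * rdiag d (\<lambda>i. \<phi> (f i)) * mat_adjoint U = V * rdiag d (\<lambda>i. \<phi> (g i)) * mat_adjoint V"
proof -
  note as = assoc_mult_mat[of _ d d _ d _ d]
  note mc = mult_carrier_mat[of _ d d _ d]
  have Uc: "U \<in> carrier_mat d d" and Vc: "V \<in> carrier_mat d d" using U V by (simp_all add: unitary_mat_def)
  have UU: "U * mat_adjoint U = 1\<^sub>m d" "mat_adjoint U * U = 1\<^sub>m d"
   and VV: "V * mat_adjoint V = 1\<^sub>m d" "mat_adjoint V * V = 1\<^sub>m d" using U V by (simp_all add: unitary_mat_def)
  have aU: "mat_adjoint U \<in> carrier_mat d d" and aV: "mat_adjoint V \<in> carrier_mat d d" using Uc Vc by simp_all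
  have cl1: "\<And>X. X \<in> carrier_mat d d \<Longrightarrow> mat_adjoint V * (V * X) = X"
    using mult_mat_inverse_cancel[OF aV Vc _ VV(2)] by blast
  define W where "W = mat_adjoint V * U"
  have Wc: "W \<in> carrier_mat d d" unfolding W_def using aV Uc by simp
  have "mat_adjoint V * (U * rdiag d f * mat_adjoint U) * U = mat_adjoint V * (V * rdiag d g * mat_adjoint V) * U"
    using eq by simp
  also have "mat_adjoint V * (U * rdiag d f * mat_adjoint U) * U = W * rdiag d f"
    unfolding W_def using Uc Vc aU aV
    by (simp add: as mc UU right_mult_one_mat)
  also have "mat_adjoint V * (V * rdiag d g * mat_adjoint V) * U = rdiag d g * W"
    unfolding W_def using Uc Vc aU aV
    by (simp add: as mc cl1)
  finally have WD: "W * rdiag d f = rdiag d g * W" .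
  have WD2: "W * rdiag d (\<lambda>i. \<phi> (f i)) = rdiag d (\<lambda>i. \<phi> (g i)) * W"
    by (rule rdiag_intertwine_fun[OF Wc WD])
  have UVW: "U = V * W" unfolding W_def using mult_mat_inverse_cancel[OF Vc aV Uc VV(1)] by simp
  have "U * rdiag d (\<lambda>i. \<phi> (f i)) * mat_adjoint U = V * (W * rdiag d (\<lambda>i. \<phi> (f i))) * mat_adjoint U"
    using Vc Wc by (simp add: UVW as mc)
  also have "\<dots> = V * rdiag d (\<lambda>i. \<phi> (g i)) * (W * mat_adjoint U)"
    unfolding WD2 using Vc Wc aU by (simp add: as mc)
  also have "W * mat_adjoint U = mat_adjoint V"
    unfolding W_def using aV Uc aU by (simp add: as mc UU right_mult_one_mat)
  finally show ?thesis .
qed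

lemma mpow_unitary_diag:
  assumes U: "unitary_mat d U" and f: "\<And>i. i < d \<Longrightarrow> 0 < f i"
    and X: "X = U * rdiag d f * mat_adjoint U"
  shows "mpow X t = U * rdiag d (\<lambda>i. f i powr t) * mat_adjoint U"
proof -
  have Uc: "U \<in> carrier_mat d d" using U by (simp add: unitary_mat_def)
  have dX: "dim_row X = d" using X Uc by simp
  have M: "mat d d (\<lambda>(i, j). if i = j then complex_of_real (Re (D $$ (i, i)) powr t) else 0)
      = rdiag d (\<lambda>i. Re (D $$ (i, i)) powr t)" for D
    by (simp add: rdiag_def)
  show ?thesis
    unfolding mpow_def dX M
  proof (rule the_equality)
    show "\<exists>Ua D. unitary_mat d Ua \<and> D \<in> carrier_mat d d \<and> diagonal_mat D \<and>
          (\<forall>i<d. Im (D $$ (i, i)) = 0 \<and> 0 < Re (D $$ (i, i))) \<and> X = Ua * D * mat_adjoint Ua \<and>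
          U * rdiag d (\<lambda>i. f i powr t) * mat_adjoint U = Ua * rdiag d (\<lambda>i. Re (D $$ (i, i)) powr t) * mat_adjoint Ua"
    proof (intro exI conjI)
      show "diagonal_mat (rdiag d f)" by (simp add: diagonal_mat_def)
      show "\<forall>i<d. Im (rdiag d f $$ (i, i)) = 0 \<and> 0 < Re (rdiag d f $$ (i, i))" using f by simp
      show "U * rdiag d (\<lambda>i. f i powr t) * mat_adjoint U = U * rdiag d (\<lambda>i. Re (rdiag d f $$ (i, i)) powr t) * mat_adjoint U"
        by (subst rdiag_cong[of d "\<lambda>i. Re (rdiag d f $$ (i, i)) powr t" "\<lambda>i. f i powr t"], simp_all)
    qed (insert U X, simp_all)
  next
    fix B assume "\<exists>Ua D. unitary_mat d Ua \<and> D \<in> carrier_mat d d \<and> diagonal_mat D \<and>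
          (\<forall>i<d. Im (D $$ (i, i)) = 0 \<and> 0 < Re (D $$ (i, i))) \<and> X = Ua * D * mat_adjoint Ua \<and>
          B = Ua * rdiag d (\<lambda>i. Re (D $$ (i, i)) powr t) * mat_adjoint Ua"
    then obtain V D where V: "unitary_mat d V" and Dc: "D \<in> carrier_mat d d" and Dd: "diagonal_mat D"
      and Dp: "\<forall>i<d. Im (D $$ (i, i)) = 0 \<and> 0 < Re (D $$ (i, i))" and XV: "X = V * D * mat_adjoint V"
      and B: "B = V * rdiag d (\<lambda>i. Re (D $$ (i, i)) powr t) * mat_adjoint V" by blast
    have DD: "D = rdiag d (\<lambda>i. Re (D $$ (i, i)))" using diag_eq_rdiag[OF Dc Dd] Dp by simp
    have "V * rdiag d (\<lambda>i. Re (D $$ (i, i))) * mat_adjoint V = U * rdiag d f * mat_adjoint U"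
      using XV X DD by simp
    from unitary_diag_fun_cong[OF V U this, of "\<lambda>x. x powr t"]
    show "B = U * rdiag d (\<lambda>i. f i powr t) * mat_adjoint U" using B by simp
  qed
qed

lemma cscalar_prod_smult:
  fixes w w' :: "complex vec"
  assumes "w \<in> carrier_vec m" "w' \<in> carrier_vec m"
  shows "(a \<cdot>\<^sub>v w) \<bullet>c (b \<cdot>\<^sub>v w') = a * cnj b * (w \<bullet>c w')"
proof -
  have "conjugate (b \<cdot>\<^sub>v w') = cnj b \<cdot>\<^sub>v conjugate w'" by (simp add: conjugate_smult_vec)
  then show ?thesis using assms
    by (simp add: smult_scalar_prod_distrib[of _ m] scalar_prod_smult_distrib[of _ m])
qed

lemma cscalar_prod_self_real:
  fixes w :: "complex vec"
  shows "w \<bullet>c w = complex_of_real (Re (w \<bullet>c w))" "0 \<le> Re (w \<bullet>c w)"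
proof -
  have "w \<bullet>c w \<ge> 0" by (rule conjugate_square_ge_0_vec)
  then show "w \<bullet>c w = complex_of_real (Re (w \<bullet>c w))" "0 \<le> Re (w \<bullet>c w)"
    by (simp_all add: less_eq_complex_def complex_eq_iff)
qed

definition cnormalize :: "complex vec \<Rightarrow> complex vec" where
  "cnormalize w = (1 / complex_of_real (sqrt (Re (w \<bullet>c w)))) \<cdot>\<^sub>v w"

lemma cnormalize_carrier[simp]: "w \<in> carrier_vec m \<Longrightarrow> cnormalize w \<in> carrier_vec m"
  by (simp add: cnormalize_def)

lemma cscalar_prod_cnormalize_self:
  fixes w :: "complex vec"
  assumes w: "w \<in> carrier_vec m" and w0: "w \<bullet>c w \<noteq> 0"
  shows "cnormalize w \<bullet>c cnormalize w = 1"
proof -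
  define r where "r = Re (w \<bullet>c w)"
  have r: "w \<bullet>c w = complex_of_real r" "0 \<le> r" unfolding r_def by (rule cscalar_prod_self_real)+
  with w0 have "0 < r" by fastforce
  then have "complex_of_real (sqrt r) * complex_of_real (sqrt r) = complex_of_real r"
    "complex_of_real (sqrt r) \<noteq> 0"
    by (simp_all flip: of_real_mult)
  then show ?thesis
    unfolding cnormalize_def r_def[symmetric] cscalar_prod_smult[OF w w] r(1) by (simp add: field_simps)
qed

lemma unitary_mat_of_corthogonal:
  assumes ws: "corthogonal ws" "set ws \<subseteq> carrier_vec m" "length ws = m"
  shows "unitary_mat m (mat_of_cols m (map cnormalize ws))"
proof -
  define us where "us = map cnormalize ws"
  define W where "W = mat_of_cols m us"
  have lus: "length us = m" unfolding us_def using ws by simp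
  have wsc: "\<And>i. i < m \<Longrightarrow> ws ! i \<in> carrier_vec m" using ws by auto
  have usc: "\<And>i. i < m \<Longrightarrow> us ! i \<in> carrier_vec m" unfolding us_def using wsc ws(3) by simp
  have Wc: "W \<in> carrier_mat m m" unfolding W_def using lus mat_of_cols_carrier(1)[of m us] by metis
  have orth: "us ! j \<bullet>c us ! i = (if i = j then 1 else 0)" if ij: "i < m" "j < m" for i j
  proof (cases "i = j")
    case True
    have "ws ! i \<bullet>c ws ! i \<noteq> 0" using ws(1) ij ws(3) by (simp add: corthogonal_def)
    then show ?thesis
      unfolding us_def using True ij ws(3) cscalar_prod_cnormalize_self[OF wsc[OF ij(1)]] by simp
  next
    case False
    then have "ws ! j \<bullet>c ws ! i = 0" using ws(1) ij ws(3) by (simp add: corthogonal_def)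
    then show ?thesis
      unfolding us_def cnormalize_def using False ij ws(3) wsc by (simp add: cscalar_prod_smult[of _ m])
  qed
  have WW: "mat_adjoint W * W = 1\<^sub>m m"
  proof (rule eq_matI)
    fix i j assume "i < dim_row (1\<^sub>m m)" "j < dim_col (1\<^sub>m m)"
    then have ij: "i < m" "j < m" by simp_all
    have "(mat_adjoint W * W) $$ (i, j) = (\<Sum>k<m. us ! j $ k * conjugate (us ! i) $ k)"
      unfolding W_def using ij lus usc[OF ij(1)] usc[OF ij(2)]
      by (simp add: mat_of_cols_index mult.commute)
    also have "\<dots> = us ! j \<bullet>c us ! i"
      unfolding scalar_prod_def using usc[OF ij(1)] by (simp add: atLeast0LessThan)
    finally show "(mat_adjoint W * W) $$ (i, j) = 1\<^sub>m m $$ (i, j)" using orth[OF ij] ij by simp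
  qed (insert Wc, simp_all)
  have "W * mat_adjoint W = 1\<^sub>m m"
    using mat_mult_left_right_inverse[OF mat_adjoint_carrier[OF Wc] Wc WW] .
  with Wc WW show ?thesis unfolding unitary_mat_def W_def us_def by blast
qed

lemma unitary_completion:
  fixes v :: "complex vec"
  assumes v: "v \<in> carrier_vec m" and v0: "v \<noteq> 0\<^sub>v m"
  obtains W k where "unitary_mat m W" and "col W 0 = k \<cdot>\<^sub>v v"
proof -
  interpret cof_vec_space m "TYPE(complex)" .
  define b where "b = basis_completion v"
  have b: "set b \<subseteq> carrier_vec m" "distinct b" "\<not> lin_dep (set b)" "length b = m" "hd b = v"
    using basis_completion[OF v v0] unfolding b_def by blast+
  have m0: "m \<noteq> 0" using v v0 by (cases m, auto)
  then obtain vs where bv: "b = v # vs" using b(4,5) by (cases b, auto)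
  define ws where "ws = gram_schmidt m b"
  have ws: "corthogonal ws" "set ws \<subseteq> carrier_vec m" "length ws = m"
    using gram_schmidt_result[OF b(1,2,3) ws_def] b(4) by auto
  have "ws ! 0 = v" using gram_schmidt_hd[OF v, of vs] bv ws(3) m0 unfolding ws_def
    by (cases "gram_schmidt m (v # vs)", auto)
  then have "col (mat_of_cols m (map cnormalize ws)) 0 = cnormalize v"
    using ws m0 v by (subst col_mat_of_cols, auto)
  then show ?thesis
    using that[OF unitary_mat_of_corthogonal[OF ws]] unfolding cnormalize_def by blast
qed

definition diag_ext :: "complex \<Rightarrow> complex mat \<Rightarrow> complex mat" where
  "diag_ext a M = mat (Suc (dim_row M)) (Suc (dim_col M))
     (\<lambda>(i,j). if i = 0 then (if j = 0 then a else 0) else if j = 0 then 0 else M $$ (i - 1, j - 1))"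

lemma diag_ext_dim[simp]: "dim_row (diag_ext a M) = Suc (dim_row M)" "dim_col (diag_ext a M) = Suc (dim_col M)"
  by (simp_all add: diag_ext_def)

lemma diag_ext_carrier: "M \<in> carrier_mat n m \<Longrightarrow> diag_ext a M \<in> carrier_mat (Suc n) (Suc m)"
  unfolding carrier_mat_def by simp

lemma index_diag_ext[simp]:
  "diag_ext a M $$ (0,0) = a"
  "j < dim_col M \<Longrightarrow> diag_ext a M $$ (0, Suc j) = 0"
  "i < dim_row M \<Longrightarrow> diag_ext a M $$ (Suc i, 0) = 0"
  "i < dim_row M \<Longrightarrow> j < dim_col M \<Longrightarrow> diag_ext a M $$ (Suc i, Suc j) = M $$ (i, j)"
  by (simp_all add: diag_ext_def)

lemma diag_ext_mult:
  assumes "dim_col M = dim_row N"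
  shows "diag_ext a M * diag_ext b N = diag_ext (a * b) (M * N)"
proof (rule eq_matI)
  fix i j assume ij: "i < dim_row (diag_ext (a * b) (M * N))" "j < dim_col (diag_ext (a * b) (M * N))"
  have "(diag_ext a M * diag_ext b N) $$ (i, j) = (\<Sum>k<Suc (dim_col M). diag_ext a M $$ (i,k) * diag_ext b N $$ (k,j))"
    using ij assms by simp
  also have "\<dots> = diag_ext a M $$ (i,0) * diag_ext b N $$ (0,j) + (\<Sum>k<dim_col M. diag_ext a M $$ (i,Suc k) * diag_ext b N $$ (Suc k,j))"
    by (rule sum.lessThan_Suc_shift)
  also have "\<dots> = diag_ext (a * b) (M * N) $$ (i, j)"
  proof (cases i)
    case 0
    then show ?thesis
    proof (cases j)
      case 0 thus ?thesis using \<open>i = 0\<close> by simp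
    next
      case (Suc j') thus ?thesis using \<open>i = 0\<close> ij assms by simp
    qed
  next
    case (Suc i')
    then show ?thesis
    proof (cases j)
      case 0 thus ?thesis using \<open>i = Suc i'\<close> ij assms by simp
    next
      case (Suc j')
      have "(\<Sum>k<dim_col M. diag_ext a M $$ (i,Suc k) * diag_ext b N $$ (Suc k,j)) = (\<Sum>k<dim_col M. M $$ (i',k) * N $$ (k,j'))"
        using \<open>i = Suc i'\<close> Suc ij assms by (intro sum.cong refl, simp)
      thus ?thesis using \<open>i = Suc i'\<close> Suc ij assms by simp
    qed
  qed
  finally show "(diag_ext a M * diag_ext b N) $$ (i, j) = diag_ext (a * b) (M * N) $$ (i, j)" .
qed simp_all

lemma mat_adjoint_diag_ext: "mat_adjoint (diag_ext a M) = diag_ext (cnj a) (mat_adjoint M)"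
proof (rule eq_matI)
  fix i j assume ij: "i < dim_row (diag_ext (cnj a) (mat_adjoint M))" "j < dim_col (diag_ext (cnj a) (mat_adjoint M))"
  show "mat_adjoint (diag_ext a M) $$ (i, j) = diag_ext (cnj a) (mat_adjoint M) $$ (i, j)"
    using ij by (cases i; cases j; simp)
qed simp_all

lemma diag_ext_one: "diag_ext 1 (1\<^sub>m n) = 1\<^sub>m (Suc n)"
proof (rule eq_matI)
  fix i j assume ij: "i < dim_row (1\<^sub>m (Suc n) :: complex mat)" "j < dim_col (1\<^sub>m (Suc n) :: complex mat)"
  show "diag_ext 1 (1\<^sub>m n) $$ (i, j) = 1\<^sub>m (Suc n) $$ (i, j)"
    using ij by (cases i; cases j; simp)
qed simp_all

lemma diag_ext_rdiag: "diag_ext (complex_of_real r) (rdiag n c) = rdiag (Suc n) (\<lambda>i. if i = 0 then r else c (i - 1))"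
proof (rule eq_matI)
  fix i j assume ij: "i < dim_row (rdiag (Suc n) (\<lambda>i. if i = 0 then r else c (i - 1)))"
     "j < dim_col (rdiag (Suc n) (\<lambda>i. if i = 0 then r else c (i - 1)))"
  show "diag_ext (complex_of_real r) (rdiag n c) $$ (i, j) = rdiag (Suc n) (\<lambda>i. if i = 0 then r else c (i - 1)) $$ (i, j)"
    using ij by (cases i; cases j; simp)
qed simp_all

lemma unitary_mat_diag_ext:
  assumes "unitary_mat n V" shows "unitary_mat (Suc n) (diag_ext 1 V)"
proof -
  have V: "V \<in> carrier_mat n n" "V * mat_adjoint V = 1\<^sub>m n" "mat_adjoint V * V = 1\<^sub>m n"
    using assms unfolding unitary_mat_def by auto
  have "diag_ext 1 V * mat_adjoint (diag_ext 1 V) = 1\<^sub>m (Suc n)"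
    unfolding mat_adjoint_diag_ext using V by (simp add: diag_ext_mult diag_ext_one)
  moreover have "mat_adjoint (diag_ext 1 V) * diag_ext 1 V = 1\<^sub>m (Suc n)"
    unfolding mat_adjoint_diag_ext using V by (simp add: diag_ext_mult diag_ext_one)
  ultimately show ?thesis unfolding unitary_mat_def using diag_ext_carrier[OF V(1)] by simp
qed

lemma mat_adjoint_congruence:
  fixes A S :: "complex mat"
  assumes A: "A \<in> carrier_mat n n" and Ah: "mat_adjoint A = A" and S: "S \<in> carrier_mat n m"
  shows "mat_adjoint (mat_adjoint S * A * S) = mat_adjoint S * A * S"
proof -
  have "mat_adjoint (mat_adjoint S * A * S) = mat_adjoint S * mat_adjoint (mat_adjoint S * A)"
    by (rule mat_adjoint_mult, use A S in simp)
  also have "mat_adjoint (mat_adjoint S * A) = A * S"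
    by (subst mat_adjoint_mult, use A S Ah in simp_all)
  finally show ?thesis using A S by (simp add: assoc_mult_mat[of _ m n _ n _ m])
qed

lemma hermitian_first_col_unit:
  fixes M :: "complex mat"
  assumes Mc: "M \<in> carrier_mat (Suc n) (Suc n)" and Mh: "mat_adjoint M = M"
    and col0: "col M 0 = e \<cdot>\<^sub>v unit_vec (Suc n) 0"
  obtains r B where "B \<in> carrier_mat n n" "mat_adjoint B = B" "M = diag_ext (complex_of_real r) B"
proof -
  have Mi0: "M $$ (i, 0) = (if i = 0 then e else 0)" if "i < Suc n" for i
    using arg_cong[OF col0, of "\<lambda>x. x $ i"] that Mc by simp
  have M0j: "M $$ (0, j) = cnj (M $$ (j, 0))" if "j < Suc n" for j
    using arg_cong[OF Mh, of "\<lambda>A. A $$ (0, j)"] that Mc by simp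
  have er: "e = complex_of_real (Re e)"
    using M0j[of 0] Mi0[of 0] by (simp add: complex_eq_iff)
  define B where "B = mat n n (\<lambda>(i,j). M $$ (Suc i, Suc j))"
  have Bc: "B \<in> carrier_mat n n" unfolding B_def by simp
  have Bh: "mat_adjoint B = B"
  proof (rule eq_matI)
    fix i j assume "i < dim_row B" "j < dim_col B"
    then show "mat_adjoint B $$ (i, j) = B $$ (i, j)"
      using arg_cong[OF Mh, of "\<lambda>A. A $$ (Suc i, Suc j)"] Bc Mc unfolding B_def by simp
  qed (insert Bc, simp_all)
  have "M = diag_ext e B"
  proof (rule eq_matI)
    fix i j assume "i < dim_row (diag_ext e B)" "j < dim_col (diag_ext e B)"
    then have ij: "i < Suc n" "j < Suc n" using Bc by simp_all
    show "M $$ (i, j) = diag_ext e B $$ (i, j)"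
    proof (cases i; cases j)
      fix j' assume "i = 0" "j = Suc j'"
      then show ?thesis using M0j[OF ij(2)] Mi0[OF ij(2)] ij Bc by simp
    next
      fix i' assume "i = Suc i'" "j = 0"
      then show ?thesis using Mi0[OF ij(1)] ij Bc by simp
    next
      fix i' j' assume "i = Suc i'" "j = Suc j'"
      then show ?thesis using ij Bc unfolding B_def by simp
    qed (use Mi0[of 0] in simp)
  qed (insert Mc Bc, simp_all)
  with Bc Bh er that show ?thesis by metis
qed

lemma hermitian_deflate:
  fixes A :: "complex mat"
  assumes A: "A \<in> carrier_mat (Suc n) (Suc n)" and Ah: "mat_adjoint A = A"
    and W: "unitary_mat (Suc n) W" and eig: "A *\<^sub>v col W 0 = e \<cdot>\<^sub>v col W 0"
  obtains r B where "B \<in> carrier_mat n n" "mat_adjoint B = B"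
    "mat_adjoint W * A * W = diag_ext (complex_of_real r) B"
proof (rule hermitian_first_col_unit)
  have Wc: "W \<in> carrier_mat (Suc n) (Suc n)" and WW: "mat_adjoint W * W = 1\<^sub>m (Suc n)"
    using W unfolding unitary_mat_def by auto
  have aW: "mat_adjoint W \<in> carrier_mat (Suc n) (Suc n)" using Wc by simp
  have cW: "col W 0 \<in> carrier_vec (Suc n)" using col_carrier_vec[OF _ Wc, of 0] by simp
  show "mat_adjoint W * A * W \<in> carrier_mat (Suc n) (Suc n)"
    by (rule mult_carrier_mat[OF mult_carrier_mat[OF aW A] Wc])
  show "mat_adjoint (mat_adjoint W * A * W) = mat_adjoint W * A * W"
    by (rule mat_adjoint_congruence[OF A Ah Wc])
  have "col (mat_adjoint W * A * W) 0 = mat_adjoint W *\<^sub>v (A *\<^sub>v col W 0)"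
    using col_mult2[OF mult_carrier_mat[OF aW A] Wc, of 0] assoc_mult_mat_vec[OF aW A cW] by simp
  also have "\<dots> = e \<cdot>\<^sub>v (mat_adjoint W *\<^sub>v col W 0)"
    unfolding eig by (rule mult_mat_vec[OF aW cW])
  also have "mat_adjoint W *\<^sub>v col W 0 = col (mat_adjoint W * W) 0"
    using col_mult2[OF aW Wc, of 0] by simp
  finally show "col (mat_adjoint W * A * W) 0 = e \<cdot>\<^sub>v unit_vec (Suc n) 0" unfolding WW by simp
qed

lemma hermitian_unitary_diagonalization:
  fixes A :: "complex mat"
  assumes "A \<in> carrier_mat n n" "mat_adjoint A = A"
  obtains U c where "unitary_mat n U" "A = U * rdiag n c * mat_adjoint U"
  using assms
proof (induction n arbitrary: A thesis)
  case 0
  have "A = 1\<^sub>m 0 * rdiag 0 (\<lambda>_. 0) * mat_adjoint (1\<^sub>m 0)"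
    by (rule eq_matI, insert "0.prems"(2), simp_all)
  moreover have "unitary_mat 0 (1\<^sub>m 0)" unfolding unitary_mat_def by simp
  ultimately show ?case using "0.prems"(1) by blast
next
  case (Suc n A)
  have A: "A \<in> carrier_mat (Suc n) (Suc n)" using Suc.prems by auto
  note as = assoc_mult_mat[of _ "Suc n" "Suc n" _ "Suc n" _ "Suc n"]
  note mc = mult_carrier_mat[of _ "Suc n" "Suc n" _ "Suc n"]
  from spectrum_non_empty[OF A] obtain e where "eigenvalue A e" unfolding spectrum_def by auto
  then obtain v where "eigenvector A v e" unfolding eigenvalue_def by blast
  then have v: "v \<in> carrier_vec (Suc n)" "v \<noteq> 0\<^sub>v (Suc n)" "A *\<^sub>v v = e \<cdot>\<^sub>v v"
    using A unfolding eigenvector_def by auto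
  obtain W k where W: "unitary_mat (Suc n) W" and Wcol: "col W 0 = k \<cdot>\<^sub>v v"
    by (rule unitary_completion[OF v(1,2)])
  have Wc: "W \<in> carrier_mat (Suc n) (Suc n)" and WW: "W * mat_adjoint W = 1\<^sub>m (Suc n)"
    using W unfolding unitary_mat_def by auto
  have "A *\<^sub>v col W 0 = e \<cdot>\<^sub>v col W 0"
    unfolding Wcol using v A by (simp add: mult_mat_vec[of _ "Suc n" "Suc n"] smult_smult_assoc mult.commute)
  then obtain r B where Bc: "B \<in> carrier_mat n n" and Bh: "mat_adjoint B = B"
    and A': "mat_adjoint W * A * W = diag_ext (complex_of_real r) B"
    using hermitian_deflate[OF A Suc.prems(3) W] by blast
  obtain V c where V: "unitary_mat n V" and BV: "B = V * rdiag n c * mat_adjoint V"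
    using Suc.IH[OF _ Bc Bh] by blast
  define E where "E = diag_ext 1 V"
  have E: "unitary_mat (Suc n) E" unfolding E_def by (rule unitary_mat_diag_ext[OF V])
  have Ec: "E \<in> carrier_mat (Suc n) (Suc n)" using E unfolding unitary_mat_def by simp
  have "A = W * (mat_adjoint W * A * W) * mat_adjoint W"
    using A Wc
    by (simp add: as mc WW right_mult_one_mat mult_mat_inverse_cancel[OF Wc mat_adjoint_carrier[OF Wc] _ WW])
  also have "mat_adjoint W * A * W = E * rdiag (Suc n) (\<lambda>i. if i = 0 then r else c (i - 1)) * mat_adjoint E"
    unfolding A' BV E_def mat_adjoint_diag_ext diag_ext_rdiag[symmetric]
    using V[unfolded unitary_mat_def] by (auto simp: diag_ext_mult)
  also have "W * (E * rdiag (Suc n) (\<lambda>i. if i = 0 then r else c (i - 1)) * mat_adjoint E) * mat_adjoint W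
      = (W * E) * rdiag (Suc n) (\<lambda>i. if i = 0 then r else c (i - 1)) * mat_adjoint (W * E)"
    using Wc Ec by (simp add: as mc mat_adjoint_mult)
  finally show ?case using Suc.prems(1) unitary_mat_mult[OF W E] by blast
qed

lemma index_mult_mat_vec_sum:
  "i < dim_row A \<Longrightarrow> dim_vec v = dim_col A \<Longrightarrow> (A *\<^sub>v v) $ i = (\<Sum>j<dim_col A. A $$ (i,j) * v $ j)"
  by (simp add: scalar_prod_def atLeast0LessThan)

lemma cscalar_prod_mat_adjoint:
  fixes S :: "complex mat"
  assumes S: "S \<in> carrier_mat m n" and v: "v \<in> carrier_vec n" and w: "w \<in> carrier_vec m"
  shows "conjugate v \<bullet> (mat_adjoint S *\<^sub>v w) = conjugate (S *\<^sub>v v) \<bullet> w"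
proof -
  have "conjugate v \<bullet> (mat_adjoint S *\<^sub>v w) = (\<Sum>i<n. conjugate v $ i * (mat_adjoint S *\<^sub>v w) $ i)"
    unfolding scalar_prod_def using S by (simp add: atLeast0LessThan)
  also have "\<dots> = (\<Sum>i<n. cnj (v $ i) * (\<Sum>k<m. cnj (S $$ (k,i)) * w $ k))"
    by (rule sum.cong[OF refl], use S v w in \<open>simp add: index_mult_mat_vec_sum del: index_mult_mat_vec\<close>)
  also have "\<dots> = (\<Sum>i<n. \<Sum>k<m. cnj (S $$ (k,i)) * cnj (v $ i) * w $ k)"
    by (simp add: sum_distrib_left ac_simps)
  also have "\<dots> = (\<Sum>k<m. \<Sum>i<n. cnj (S $$ (k,i)) * cnj (v $ i) * w $ k)"
    by (rule sum.swap)
  also have "\<dots> = (\<Sum>k<m. cnj (\<Sum>i<n. S $$ (k,i) * v $ i) * w $ k)"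
    by (simp add: cnj_sum sum_distrib_right)
  also have "\<dots> = (\<Sum>k<m. conjugate (S *\<^sub>v v) $ k * w $ k)"
    by (rule sum.cong[OF refl], use S v w in \<open>simp add: index_mult_mat_vec_sum del: index_mult_mat_vec\<close>)
  also have "\<dots> = conjugate (S *\<^sub>v v) \<bullet> w"
    unfolding scalar_prod_def using w by (simp add: atLeast0LessThan)
  finally show ?thesis .
qed

lemma invertible_mult_mat_vec_nonzero:
  fixes S Si :: "complex mat"
  assumes S: "S \<in> carrier_mat d d" and Si: "Si \<in> carrier_mat d d" and SiS: "Si * S = 1\<^sub>m d"
    and v: "v \<in> carrier_vec d" "v \<noteq> 0\<^sub>v d"
  shows "S *\<^sub>v v \<noteq> 0\<^sub>v d"
proof
  assume "S *\<^sub>v v = 0\<^sub>v d"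
  then have "Si *\<^sub>v (S *\<^sub>v v) = 0\<^sub>v d" using Si by (intro eq_vecI, simp_all add: scalar_prod_def)
  moreover have "Si *\<^sub>v (S *\<^sub>v v) = v"
    using assoc_mult_mat_vec[OF Si S v(1), symmetric] SiS v by simp
  ultimately show False using v by simp
qed

lemma posdef_congruence:
  assumes X: "posdef d X" and S: "S \<in> carrier_mat d d" and Si: "Si \<in> carrier_mat d d"
    and SSi: "S * Si = 1\<^sub>m d"
  shows "posdef d (mat_adjoint S * X * S)"
proof -
  have Xc: "X \<in> carrier_mat d d" and Xh: "mat_adjoint X = X"
    and Xp: "\<And>v. v \<in> carrier_vec d \<Longrightarrow> v \<noteq> 0\<^sub>v d \<Longrightarrow> 0 < Re (conjugate v \<bullet> (X *\<^sub>v v))"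
    using X unfolding posdef_def by auto
  have aS: "mat_adjoint S \<in> carrier_mat d d" using S by simp
  have SiS: "Si * S = 1\<^sub>m d" using mat_mult_left_right_inverse[OF S Si SSi] .
  have p: "0 < Re (conjugate v \<bullet> ((mat_adjoint S * X * S) *\<^sub>v v))"
    if v: "v \<in> carrier_vec d" "v \<noteq> 0\<^sub>v d" for v
  proof -
    have Sv: "S *\<^sub>v v \<in> carrier_vec d" using S v by simp
    have "(mat_adjoint S * X * S) *\<^sub>v v = mat_adjoint S *\<^sub>v (X *\<^sub>v (S *\<^sub>v v))"
      using assoc_mult_mat_vec[OF mult_carrier_mat[OF aS Xc] S v(1)] assoc_mult_mat_vec[OF aS Xc Sv] by simp
    then have "conjugate v \<bullet> ((mat_adjoint S * X * S) *\<^sub>v v) = conjugate (S *\<^sub>v v) \<bullet> (X *\<^sub>v (S *\<^sub>v v))"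
      using cscalar_prod_mat_adjoint[OF S v(1)] Xc Sv by simp
    then show ?thesis using Xp[OF Sv invertible_mult_mat_vec_nonzero[OF S Si SiS v]] by simp
  qed
  show ?thesis
    unfolding posdef_def using mult_carrier_mat[OF mult_carrier_mat[OF aS Xc] S]
      mat_adjoint_congruence[OF Xc Xh S] p by blast
qed

lemma cnj_mult_real_mult: "cnj a * (complex_of_real r * a) = complex_of_real (r * (cmod a)\<^sup>2)"
proof -
  have "complex_of_real (r * (cmod a)\<^sup>2) = complex_of_real r * complex_of_real ((cmod a)\<^sup>2)"
    by (rule of_real_mult)
  also have "complex_of_real ((cmod a)\<^sup>2) = a * cnj a" by (rule complex_norm_square)
  finally show ?thesis by (metis mult.assoc mult.commute)
qed

lemma posdef_rdiag:
  assumes f: "\<And>i. i < d \<Longrightarrow> 0 < f i"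
  shows "posdef d (rdiag d f)"
proof -
  have p: "0 < Re (conjugate v \<bullet> (rdiag d f *\<^sub>v v))" if v: "v \<in> carrier_vec d" "v \<noteq> 0\<^sub>v d" for v
  proof -
    obtain j where j: "j < d" "v $ j \<noteq> 0"
      using v by (metis eq_vecI carrier_vecD index_zero_vec(1) index_zero_vec(2))
    have e: "conjugate v \<bullet> (rdiag d f *\<^sub>v v) = (\<Sum>i<d. complex_of_real (f i * (cmod (v $ i))\<^sup>2))"
    proof -
      have "conjugate v \<bullet> (rdiag d f *\<^sub>v v) = (\<Sum>i<d. conjugate v $ i * (rdiag d f *\<^sub>v v) $ i)"
        unfolding scalar_prod_def by (simp add: atLeast0LessThan)
      also have "\<dots> = (\<Sum>i<d. cnj (v $ i) * (complex_of_real (f i) * v $ i))"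
        by (rule sum.cong[OF refl], use v in \<open>simp add: index_mult_mat_vec_sum if_distrib[where f="\<lambda>x. x * _"] sum.delta del: index_mult_mat_vec cong: if_cong\<close>)
      also have "\<dots> = (\<Sum>i<d. complex_of_real (f i * (cmod (v $ i))\<^sup>2))"
        by (intro sum.cong refl, rule cnj_mult_real_mult)
      finally show ?thesis .
    qed
    have nn: "0 \<le> f i * (cmod (v $ i))\<^sup>2" if "i < d" for i using f[OF that] by simp
    have pj: "0 < f j * (cmod (v $ j))\<^sup>2" using f[OF j(1)] j(2) by simp
    have "0 < (\<Sum>i<d. f i * (cmod (v $ i))\<^sup>2)"
      by (rule sum_pos2[of _ j], use j nn pj in simp_all)
    thus ?thesis unfolding e by simp
  qed
  show ?thesis unfolding posdef_def using p by simp
qed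

definition pos_spectral :: "nat \<Rightarrow> complex mat \<Rightarrow> complex mat \<Rightarrow> (nat \<Rightarrow> real) \<Rightarrow> bool" where
  "pos_spectral d X U f \<longleftrightarrow> unitary_mat d U \<and> (\<forall>i<d. 0 < f i) \<and> X = U * rdiag d f * mat_adjoint U"

lemma pos_spectral_posdef:
  assumes "pos_spectral d X U f" shows "posdef d X"
proof -
  have U: "U \<in> carrier_mat d d" "U * mat_adjoint U = 1\<^sub>m d" "mat_adjoint U * U = 1\<^sub>m d"
    and f: "\<forall>i<d. 0 < f i" and X: "X = U * rdiag d f * mat_adjoint U"
    using assms unfolding pos_spectral_def unitary_mat_def by auto
  have "posdef d (mat_adjoint (mat_adjoint U) * rdiag d f * mat_adjoint U)"
    by (rule posdef_congruence[OF posdef_rdiag mat_adjoint_carrier[OF U(1)] U(1) U(3)], use f in simp)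
  thus ?thesis using X by simp
qed

lemma unitary_diag_col:
  assumes U: "unitary_mat d U" and XU: "X = U * rdiag d c * mat_adjoint U" and i: "i < d"
  shows "X *\<^sub>v col U i = complex_of_real (c i) \<cdot>\<^sub>v col U i" "conjugate (col U i) \<bullet> col U i = 1"
proof -
  have Uc: "U \<in> carrier_mat d d" and UU: "mat_adjoint U * U = 1\<^sub>m d" using U unfolding unitary_mat_def by auto
  have aU: "mat_adjoint U \<in> carrier_mat d d" using Uc by simp
  have "X * U = U * rdiag d c * (mat_adjoint U * U)" unfolding XU
    by (rule assoc_mult_mat[of _ d d _ d _ d], use Uc aU in simp_all)
  then have XUe: "X * U = U * rdiag d c" unfolding UU using Uc by (simp add: right_mult_one_mat[of _ d d])
  have Xc: "X \<in> carrier_mat d d" unfolding XU using Uc aU by (simp add: mult_carrier_mat[of _ d d _ d])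
  have "X *\<^sub>v col U i = col (X * U) i" using col_mult2[OF Xc Uc i] by simp
  also have "\<dots> = complex_of_real (c i) \<cdot>\<^sub>v col U i"
    unfolding XUe by (rule eq_vecI, use Uc i in \<open>simp_all add: index_mult_rdiag del: index_mult_mat_sum\<close>)
  finally show "X *\<^sub>v col U i = complex_of_real (c i) \<cdot>\<^sub>v col U i" .
  have "conjugate (col U i) \<bullet> col U i = (mat_adjoint U * U) $$ (i,i)"
    unfolding scalar_prod_def using Uc i by (simp add: atLeast0LessThan)
  then show "conjugate (col U i) \<bullet> col U i = 1" unfolding UU using i by simp
qed

lemma posdef_pos_spectral:
  assumes X: "posdef d X" obtains U f where "pos_spectral d X U f"
proof -
  have Xc: "X \<in> carrier_mat d d" and Xh: "mat_adjoint X = X"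
    and Xp: "\<And>v. v \<in> carrier_vec d \<Longrightarrow> v \<noteq> 0\<^sub>v d \<Longrightarrow> 0 < Re (conjugate v \<bullet> (X *\<^sub>v v))"
    using X unfolding posdef_def by auto
  obtain U c where U: "unitary_mat d U" and XU: "X = U * rdiag d c * mat_adjoint U"
    by (rule hermitian_unitary_diagonalization[OF Xc Xh])
  have cpos: "0 < c i" if i: "i < d" for i
  proof -
    have uc: "col U i \<in> carrier_vec d" using U i by (simp add: unitary_mat_def)
    note u = unitary_diag_col[OF U XU i]
    then have "col U i \<noteq> 0\<^sub>v d" by auto
    moreover have "conjugate (col U i) \<bullet> (X *\<^sub>v col U i) = complex_of_real (c i)"
      unfolding u(1) using uc u(2) by (simp add: scalar_prod_smult_distrib[of _ d])
    ultimately show ?thesis using Xp[OF uc] by simp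
  qed
  show ?thesis using that U XU cpos unfolding pos_spectral_def by blast
qed

lemma pos_spectral_mpow:
  "pos_spectral d X U f \<Longrightarrow> mpow X t = U * rdiag d (\<lambda>i. f i powr t) * mat_adjoint U"
  unfolding pos_spectral_def using mpow_unitary_diag by blast

lemma pos_spectral_mpow_spectral:
  "pos_spectral d X U f \<Longrightarrow> pos_spectral d (mpow X t) U (\<lambda>i. f i powr t)"
  using pos_spectral_mpow[of d X U f t] unfolding pos_spectral_def by fastforce

lemma posdef_mpow: "posdef d X \<Longrightarrow> posdef d (mpow X t)"
  by (metis posdef_pos_spectral pos_spectral_mpow_spectral pos_spectral_posdef)

lemma posdef_carrier: "posdef d X \<Longrightarrow> X \<in> carrier_mat d d"
  by (simp add: posdef_def)

lemma mpow_carrier: "posdef d X \<Longrightarrow> mpow X t \<in> carrier_mat d d"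
  using posdef_carrier posdef_mpow by blast

lemma mpow_hermitian: "posdef d X \<Longrightarrow> mat_adjoint (mpow X t) = mpow X t"
  using posdef_def posdef_mpow by blast

lemma unitary_conj_mult_rdiag:
  assumes U: "unitary_mat d U"
  shows "U * rdiag d f * mat_adjoint U * (U * rdiag d g * mat_adjoint U) = U * rdiag d (\<lambda>i. f i * g i) * mat_adjoint U"
proof -
  note as = assoc_mult_mat[of _ d d _ d _ d]
  note mc = mult_carrier_mat[of _ d d _ d]
  have Uc: "U \<in> carrier_mat d d" and UU: "mat_adjoint U * U = 1\<^sub>m d" using U by (simp_all add: unitary_mat_def)
  have aU: "mat_adjoint U \<in> carrier_mat d d" using Uc by simp
  have c: "\<And>X. X \<in> carrier_mat d d \<Longrightarrow> mat_adjoint U * (U * X) = X"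
    using mult_mat_inverse_cancel[OF aU Uc _ UU] by blast
  have "U * rdiag d f * mat_adjoint U * (U * rdiag d g * mat_adjoint U) = U * (rdiag d f * rdiag d g * mat_adjoint U)"
    using Uc aU by (simp add: as mc c)
  thus ?thesis using Uc aU by (simp add: as mc rdiag_mult_rdiag)
qed

lemma mpow_mult_mpow:
  assumes "posdef d X" shows "mpow X s * mpow X r = mpow X (s + r)"
proof -
  obtain U f where u: "pos_spectral d X U f" using posdef_pos_spectral[OF assms] .
  have U: "unitary_mat d U" and f: "\<forall>i<d. 0 < f i" using u pos_spectral_def by auto
  show ?thesis unfolding pos_spectral_mpow[OF u] unitary_conj_mult_rdiag[OF U]
    by (rule arg_cong[where f="\<lambda>D. U * D * mat_adjoint U"], rule rdiag_cong, simp add: f powr_add)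
qed

lemma mpow_mult_mpow_assoc:
  assumes "posdef d X" "Z \<in> carrier_mat d n"
  shows "mpow X s * (mpow X r * Z) = mpow X (s + r) * Z"
  using assoc_mult_mat[OF mpow_carrier mpow_carrier assms(2), symmetric] mpow_mult_mpow assms(1) by metis

lemma pos_spectral_mpow_eqI:
  assumes "pos_spectral d X U f" "\<And>i. i < d \<Longrightarrow> f i powr t = g i"
  shows "mpow X t = U * rdiag d g * mat_adjoint U"
  unfolding pos_spectral_mpow[OF assms(1)] using assms(2) by (simp cong: rdiag_cong)

lemma mpow_one:
  assumes "posdef d X" shows "mpow X 1 = X"
proof -
  obtain U f where u: "pos_spectral d X U f" using posdef_pos_spectral[OF assms] .
  have f: "\<forall>i<d. 0 < f i" and X: "X = U * rdiag d f * mat_adjoint U"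
    using u pos_spectral_def by auto
  have "mpow X 1 = U * rdiag d f * mat_adjoint U"
    by (rule pos_spectral_mpow_eqI[OF u], use f in force)
  thus ?thesis using X by simp
qed

lemma mpow_zero:
  assumes "posdef d X" shows "mpow X 0 = 1\<^sub>m d"
proof -
  obtain U f where u: "pos_spectral d X U f" using posdef_pos_spectral[OF assms] .
  have U: "U \<in> carrier_mat d d" "U * mat_adjoint U = 1\<^sub>m d"
    using u by (simp_all add: pos_spectral_def unitary_mat_def)
  have f: "\<forall>i<d. 0 < f i" using u pos_spectral_def by auto
  have "mpow X 0 = U * rdiag d (\<lambda>_. 1) * mat_adjoint U"
    by (rule pos_spectral_mpow_eqI[OF u], use f in auto)
  thus ?thesis using U by (simp add: rdiag_one right_mult_one_mat)
qed

lemma mpow_mpow: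
  assumes "posdef d X" shows "mpow (mpow X s) r = mpow X (s * r)"
proof -
  obtain U f where u: "pos_spectral d X U f" using posdef_pos_spectral[OF assms] .
  have f: "\<forall>i<d. 0 < f i" using u pos_spectral_def by auto
  have "mpow (mpow X s) r = U * rdiag d (\<lambda>i. f i powr (s * r)) * mat_adjoint U"
    by (rule pos_spectral_mpow_eqI[OF pos_spectral_mpow_spectral[OF u]], simp add: powr_powr)
  also have "\<dots> = mpow X (s * r)" by (rule pos_spectral_mpow[OF u, symmetric])
  finally show ?thesis .
qed

lemma pos_spectral_unitary_conj:
  assumes u: "pos_spectral d X U f" and K: "unitary_mat d K"
  shows "pos_spectral d (K * X * mat_adjoint K) (K * U) f"
proof -
  note as = assoc_mult_mat[of _ d d _ d _ d]
  note mc = mult_carrier_mat[of _ d d _ d]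
  have U: "unitary_mat d U" and f: "\<forall>i<d. 0 < f i" and X: "X = U * rdiag d f * mat_adjoint U"
    using u pos_spectral_def by auto
  have Uc: "U \<in> carrier_mat d d" and Kc: "K \<in> carrier_mat d d" using U K by (simp_all add: unitary_mat_def)
  have "K * X * mat_adjoint K = K * U * rdiag d f * mat_adjoint (K * U)"
    unfolding X using Uc Kc by (simp add: mat_adjoint_mult as mc)
  thus ?thesis unfolding pos_spectral_def using unitary_mat_mult[OF K U] f by simp
qed

lemma mpow_unitary_conj:
  assumes "posdef d X" and K: "unitary_mat d K"
  shows "mpow (K * X * mat_adjoint K) t = K * mpow X t * mat_adjoint K"
proof -
  note as = assoc_mult_mat[of _ d d _ d _ d]
  note mc = mult_carrier_mat[of _ d d _ d]
  obtain U f where u: "pos_spectral d X U f" using posdef_pos_spectral[OF assms(1)] .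
  have Uc: "U \<in> carrier_mat d d" and Kc: "K \<in> carrier_mat d d"
    using u K by (simp_all add: unitary_mat_def pos_spectral_def)
  show ?thesis
    unfolding pos_spectral_mpow[OF pos_spectral_unitary_conj[OF u K]] pos_spectral_mpow[OF u] using Uc Kc
    by (simp add: mat_adjoint_mult as mc)
qed

lemma minv_eqI:
  assumes X: "X \<in> carrier_mat n n" and Y: "Y \<in> carrier_mat n n" and XY: "X * Y = 1\<^sub>m n"
  shows "minv X = Y"
proof -
  have dX: "dim_row X = n" using X by simp
  have YX: "Y * X = 1\<^sub>m n" using mat_mult_left_right_inverse[OF X Y XY] .
  show ?thesis unfolding minv_def dX
  proof (rule the_equality)
    show "Y \<in> carrier_mat n n \<and> X * Y = 1\<^sub>m n \<and> Y * X = 1\<^sub>m n" using Y XY YX by simp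
  next
    fix B assume B: "B \<in> carrier_mat n n \<and> X * B = 1\<^sub>m n \<and> B * X = 1\<^sub>m n"
    have "B = B * (X * Y)" using B right_mult_one_mat[of B n n] by (simp add: XY)
    also have "\<dots> = (B * X) * Y" using B by (intro assoc_mult_mat[symmetric, OF _ X Y, of _ n], simp)
    also have "\<dots> = Y" using B left_mult_one_mat[OF Y] by (simp del: assoc_mult_mat)
    finally show "B = Y" .
  qed
qed

lemma minv_eq_mpow: "posdef d X \<Longrightarrow> minv X = mpow X (-1)"
  using minv_eqI[OF posdef_carrier mpow_carrier] mpow_mult_mpow[of d X 1 "-1"] mpow_one[of d X] mpow_zero[of d X]
  by auto

lemma mpow_minv: "posdef d X \<Longrightarrow> mpow (minv X) t = mpow X (- t)"
  by (simp add: minv_eq_mpow mpow_mpow)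

lemma posdef_minv: "posdef d X \<Longrightarrow> posdef d (minv X)"
  by (simp add: minv_eq_mpow posdef_mpow)

lemma mtrace_mult_comm:
  fixes A B :: "complex mat"
  assumes A: "A \<in> carrier_mat n m" and B: "B \<in> carrier_mat m n"
  shows "mtrace (A * B) = mtrace (B * A)"
proof -
  have dims: "dim_row A = n" "dim_col A = m" "dim_row B = m" "dim_col B = n" using A B by auto
  have e: "mtrace (X * Y) = (\<Sum>i<dim_row X. \<Sum>k<dim_col X. X $$ (i,k) * Y $$ (k,i))"
    if "dim_col X = dim_row Y" "dim_col Y = dim_row X" for X Y :: "complex mat"
    unfolding mtrace_def
  proof (rule sum.cong)
    fix i assume "i \<in> {..<dim_row X}"
    then have i: "i < dim_row X" by simp
    show "(X * Y) $$ (i, i) = (\<Sum>k<dim_col X. X $$ (i, k) * Y $$ (k, i))"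
      using index_mult_mat_sum[of i X i Y] i that by simp
  qed simp
  have "mtrace (A * B) = (\<Sum>i<n. \<Sum>k<m. A $$ (i,k) * B $$ (k,i))"
    using e[of A B] dims by simp
  also have "\<dots> = (\<Sum>k<m. \<Sum>i<n. B $$ (k,i) * A $$ (i,k))"
    by (subst sum.swap, simp add: mult.commute)
  also have "\<dots> = mtrace (B * A)"
    using e[of B A] dims by simp
  finally show ?thesis .
qed

lemma mtrace_unitary_conj:
  assumes K: "unitary_mat d K" and Y: "Y \<in> carrier_mat d d"
  shows "mtrace (K * Y * mat_adjoint K) = mtrace Y"
proof -
  have Kc: "K \<in> carrier_mat d d" and KK: "mat_adjoint K * K = 1\<^sub>m d" using K unfolding unitary_mat_def by auto
  have aK: "mat_adjoint K \<in> carrier_mat d d" using Kc by simp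
  have "mtrace (K * Y * mat_adjoint K) = mtrace (mat_adjoint K * (K * Y))"
    by (rule mtrace_mult_comm[OF mult_carrier_mat[OF Kc Y] aK])
  also have "mat_adjoint K * (K * Y) = Y" using mult_mat_assoc_subst[OF aK Kc Y KK] Y by simp
  finally show ?thesis .
qed

lemma posdef_one: "posdef d (1\<^sub>m d)"
  using posdef_rdiag[of d "\<lambda>_. 1"] by (simp add: rdiag_one)

lemma minv_posdef:
  assumes "posdef d X"
  shows "minv X \<in> carrier_mat d d" "minv X * X = 1\<^sub>m d"
  using mpow_carrier[OF assms] mpow_mult_mpow[OF assms, of "-1" 1]
  by (simp_all add: minv_eq_mpow[OF assms] mpow_one[OF assms] mpow_zero[OF assms])

lemma inverse_mat_adjoint:
  fixes S Si :: "complex mat"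
  assumes "S \<in> carrier_mat d d" "Si \<in> carrier_mat d d" "S * Si = 1\<^sub>m d"
  shows "mat_adjoint Si * mat_adjoint S = 1\<^sub>m d"
  using mat_adjoint_mult[of S Si] assms by simp

lemma posdef_mult_adjoint:
  assumes S: "S \<in> carrier_mat d d" and Si: "Si \<in> carrier_mat d d" and SSi: "S * Si = 1\<^sub>m d"
  shows "posdef d (S * mat_adjoint S)"
  using posdef_congruence[OF posdef_one mat_adjoint_carrier[OF S] mat_adjoint_carrier[OF Si]
      inverse_mat_adjoint[OF Si S mat_mult_left_right_inverse[OF S Si SSi]]] S
  by simp

text \<open>Polar decomposition; the unitary factor is \<open>K = (S S\<^sup>*)\<^sup>-\<^sup>1\<^sup>/\<^sup>2 S\<close>.\<close>

lemma msqrt_mult_adjoint_polar: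
  assumes S: "S \<in> carrier_mat d d" and Si: "Si \<in> carrier_mat d d" and SSi: "S * Si = 1\<^sub>m d"
  obtains K where "unitary_mat d K"
    and "msqrt (S * mat_adjoint S) = S * mat_adjoint K"
    and "msqrt (S * mat_adjoint S) = K * mat_adjoint S"
proof -
  define R where "R = S * mat_adjoint S"
  define K where "K = mpow R (-1/2) * S"
  have R: "posdef d R" unfolding R_def by (rule posdef_mult_adjoint[OF S Si SSi])
  have SiS: "Si * S = 1\<^sub>m d" by (rule mat_mult_left_right_inverse[OF S Si SSi])
  have aS: "mat_adjoint S \<in> carrier_mat d d" and aSi: "mat_adjoint Si \<in> carrier_mat d d"
    using S Si by simp_all
  have aSiS: "mat_adjoint S * mat_adjoint Si = 1\<^sub>m d" by (rule inverse_mat_adjoint[OF Si S SiS])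
  have "minv R = mat_adjoint Si * Si"
    unfolding R_def
  proof (rule minv_eqI[where n = d])
    have "S * mat_adjoint S * (mat_adjoint Si * Si) = S * (mat_adjoint S * mat_adjoint Si) * Si"
      using S Si aS aSi by (simp add: assoc_mult_mat[of _ d d _ d _ d] mult_carrier_mat[of _ d d _ d])
    then show "S * mat_adjoint S * (mat_adjoint Si * Si) = 1\<^sub>m d" using aSiS SSi S by simp
  qed (use S Si aSi in \<open>simp_all add: mult_carrier_mat[of _ d d _ d]\<close>)
  then have R_inv: "mpow R (-1) = mat_adjoint Si * Si" by (simp add: minv_eq_mpow[OF R])
  have SS: "S * mat_adjoint S = mpow R 1" using mpow_one[OF R] unfolding R_def by simp
  note kit = assoc_mult_mat[of _ d d _ d _ d] mult_carrier_mat[of _ d d _ d] mpow_carrier[OF R]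
    mpow_mult_mpow[OF R] mpow_mult_mpow_assoc[OF R, where n = d] mpow_zero[OF R] S aS
    SS mult_mat_assoc_subst[OF S aS _ SS, where l = d]
  have Kc: "K \<in> carrier_mat d d" unfolding K_def by (simp add: kit)
  have adj_K: "mat_adjoint K = mat_adjoint S * mpow R (-1/2)"
    unfolding K_def using mat_adjoint_mult[of "mpow R (-1/2)" S] mpow_carrier[OF R, of "-1/2"] S
    by (simp add: mpow_hermitian[OF R])
  have KK: "K * mat_adjoint K = 1\<^sub>m d"
    unfolding adj_K unfolding K_def by (simp add: kit)
  have "mat_adjoint K * K = mat_adjoint S * (mat_adjoint Si * Si) * S"
    unfolding adj_K unfolding K_def R_inv[symmetric] by (simp add: kit)
  also have "\<dots> = 1\<^sub>m d"
    using Si aSi by (simp add: kit mult_mat_assoc_subst[OF aS aSi _ aSiS] SiS)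
  finally have KK': "mat_adjoint K * K = 1\<^sub>m d" .
  have right: "msqrt R = S * mat_adjoint K"
    unfolding adj_K msqrt_def by (simp add: kit)
  have left: "msqrt R = K * mat_adjoint S"
    unfolding K_def msqrt_def by (simp add: kit)
  have "unitary_mat d K" unfolding unitary_mat_def using Kc KK KK' by simp
  with right left show ?thesis using that unfolding R_def by blast
qed

lemma msqrt_polar_sandwich:
  assumes X: "posdef d X" and S: "S \<in> carrier_mat d d" and Si: "Si \<in> carrier_mat d d"
    and SSi: "S * Si = 1\<^sub>m d" and K: "unitary_mat d K"
    and right: "msqrt (S * mat_adjoint S) = S * mat_adjoint K"
    and left: "msqrt (S * mat_adjoint S) = K * mat_adjoint S"
  shows "msqrt (msqrt (S * mat_adjoint S) * X * msqrt (S * mat_adjoint S))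
    = K * msqrt (mat_adjoint S * X * S) * mat_adjoint K"
proof -
  have "msqrt (S * mat_adjoint S) * X * msqrt (S * mat_adjoint S) = K * (mat_adjoint S * X * S) * mat_adjoint K"
    using K S posdef_carrier[OF X] unfolding unitary_mat_def
    by (subst (1) left, subst right, simp add: assoc_mult_mat[of _ d d _ d _ d] mult_carrier_mat[of _ d d _ d])
  then show ?thesis
    unfolding msqrt_def using mpow_unitary_conj[OF posdef_congruence[OF X S Si SSi] K] by simp
qed

lemma gen_fidelity_mult_adjoint:
  assumes P: "posdef d P" and Q: "posdef d Q"
    and S: "S \<in> carrier_mat d d" and Si: "Si \<in> carrier_mat d d" and SSi: "S * Si = 1\<^sub>m d"
  shows "gen_fidelity (S * mat_adjoint S) P Q
    = mtrace (msqrt (mat_adjoint S * P * S) * (Si * mat_adjoint Si) * msqrt (mat_adjoint S * Q * S))"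
proof -
  define R where "R = S * mat_adjoint S"
  obtain K where K: "unitary_mat d K"
    and right: "msqrt R = S * mat_adjoint K" and left: "msqrt R = K * mat_adjoint S"
    using msqrt_mult_adjoint_polar[OF S Si SSi] unfolding R_def by blast
  have R: "posdef d R" unfolding R_def by (rule posdef_mult_adjoint[OF S Si SSi])
  have Kc: "K \<in> carrier_mat d d" and aK: "mat_adjoint K \<in> carrier_mat d d"
    and KK: "mat_adjoint K * K = 1\<^sub>m d" and KK': "K * mat_adjoint K = 1\<^sub>m d"
    using K by (simp_all add: unitary_mat_def)
  have aS: "mat_adjoint S \<in> carrier_mat d d" and aSi: "mat_adjoint Si \<in> carrier_mat d d"
    using S Si by simp_all
  have aSiS: "mat_adjoint S * mat_adjoint Si = 1\<^sub>m d"
    by (rule inverse_mat_adjoint[OF Si S mat_mult_left_right_inverse[OF S Si SSi]])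
  note kit = assoc_mult_mat[of _ d d _ d _ d] mult_carrier_mat[of _ d d _ d] S Si aS aSi Kc aK
    mult_mat_assoc_subst[OF aK Kc _ KK, where l = d] mult_mat_assoc_subst[OF S Si _ SSi, where l = d]
    mult_mat_assoc_subst[OF aS aSi _ aSiS, where l = d] left_mult_one_mat[of _ d d]
  note sqrt_sandwich = msqrt_polar_sandwich[OF _ S Si SSi K right[unfolded R_def] left[unfolded R_def],
      folded R_def]
  have "R = msqrt R * msqrt R"
    unfolding msqrt_def by (simp add: mpow_mult_mpow[OF R] mpow_one[OF R])
  also have "\<dots> = K * (mat_adjoint S * S) * mat_adjoint K"
    by (subst (1) left, subst right, simp add: kit)
  finally have R_K: "R = K * (mat_adjoint S * S) * mat_adjoint K" .
  have R_inv: "minv R = K * (Si * mat_adjoint Si) * mat_adjoint K"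
    by (rule minv_eqI[where n = d], unfold R_K, simp_all add: kit KK')
  define X Y where "X = msqrt (mat_adjoint S * P * S)" and "Y = msqrt (mat_adjoint S * Q * S)"
  have XY: "X \<in> carrier_mat d d" "Y \<in> carrier_mat d d"
    unfolding X_def Y_def msqrt_def
    using mpow_carrier[OF posdef_congruence[OF P S Si SSi]] mpow_carrier[OF posdef_congruence[OF Q S Si SSi]]
    by blast+
  have "gen_fidelity R P Q
      = mtrace (K * X * mat_adjoint K * (K * (Si * mat_adjoint Si) * mat_adjoint K) * (K * Y * mat_adjoint K))"
    unfolding gen_fidelity_def sqrt_sandwich[OF P] sqrt_sandwich[OF Q] R_inv X_def Y_def ..
  also have "\<dots> = mtrace (K * (X * (Si * mat_adjoint Si) * Y) * mat_adjoint K)"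
    by (simp add: kit XY)
  also have "\<dots> = mtrace (X * (Si * mat_adjoint Si) * Y)"
    by (rule mtrace_unitary_conj[OF K], simp add: kit XY)
  finally show ?thesis unfolding R_def X_def Y_def .
qed

lemma minv_congruence:
  assumes Q: "posdef d Q" and H: "H \<in> carrier_mat d d" and Hi: "Hi \<in> carrier_mat d d"
    and HHi: "H * Hi = 1\<^sub>m d"
  shows "minv (H * minv Q * H) = Hi * Q * Hi"
proof (rule minv_eqI[where n = d])
  note kit = assoc_mult_mat[of _ d d _ d _ d] mult_carrier_mat[of _ d d _ d] left_mult_one_mat[of _ d d]
    H Hi posdef_carrier[OF Q] minv_posdef(1)[OF Q]
    mult_mat_assoc_subst[OF H Hi _ HHi, where l = d]
    mult_mat_assoc_subst[OF minv_posdef(1)[OF Q] posdef_carrier[OF Q] _ minv_posdef(2)[OF Q], where l = d]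
  show "H * minv Q * H * (Hi * Q * Hi) = 1\<^sub>m d"
    by (simp add: kit HHi)
qed (simp_all add: assms mult_carrier_mat[of _ d d _ d] posdef_carrier minv_posdef)

lemma ai_geodesic_minv:
  assumes "posdef d P"
  shows "ai_geodesic (minv P) B t
    = mpow P (-1/2) * mpow (mpow P (1/2) * B * mpow P (1/2)) t * mpow P (-1/2)"
  unfolding ai_geodesic_def msqrt_def mpow_minv[OF assms] by simp

lemma posdef_sandwich_minv:
  assumes P: "posdef d P" and Q: "posdef d Q"
  shows "posdef d (mpow P (1/2) * minv Q * mpow P (1/2))"
  using posdef_congruence[OF posdef_minv[OF Q] mpow_carrier[OF P] mpow_carrier[OF P], of "1/2" "-1/2"]
  by (simp add: mpow_hermitian[OF P] mpow_mult_mpow[OF P] mpow_zero[OF P])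

lemma mpow_sandwich_minv_neg_one:
  assumes P: "posdef d P" and Q: "posdef d Q"
  shows "mpow (mpow P (1/2) * minv Q * mpow P (1/2)) (-1) = mpow P (-1/2) * Q * mpow P (-1/2)"
  using minv_congruence[OF Q mpow_carrier[OF P] mpow_carrier[OF P], of "1/2" "-1/2"]
    minv_eq_mpow[OF posdef_sandwich_minv[OF P Q]]
  by (simp add: mpow_mult_mpow[OF P] mpow_zero[OF P])

lemma gen_fidelity_geodesic:
  assumes P: "posdef d P" and Q: "posdef d Q"
    and C_def: "C = mpow P (1/2) * minv Q * mpow P (1/2)"
  shows "gen_fidelity (mpow P (-1/2) * mpow C t * mpow P (-1/2)) P Q = mtrace (P * mpow C (-1/2))"
proof -
  define H Hi where "H = mpow P (1/2)" and "Hi = mpow P (-1/2)"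
  have H: "H \<in> carrier_mat d d" "mat_adjoint H = H" and Hi: "Hi \<in> carrier_mat d d" "mat_adjoint Hi = Hi"
    unfolding H_def Hi_def by (simp_all add: mpow_carrier[OF P] mpow_hermitian[OF P])
  have C: "posdef d C" unfolding C_def by (rule posdef_sandwich_minv[OF P Q])
  note kit = assoc_mult_mat[of _ d d _ d _ d] mult_carrier_mat[of _ d d _ d] left_mult_one_mat[of _ d d]
    posdef_carrier[OF P] mpow_carrier[OF P] mpow_carrier[OF C]
    mpow_mult_mpow[OF P] mpow_mult_mpow_assoc[OF P, where n = d] mpow_zero[OF P]
    mpow_mult_mpow[OF C] mpow_mult_mpow_assoc[OF C, where n = d] mpow_zero[OF C]
  have Q_eq: "Q = H * mpow C (-1) * H"
    using mpow_sandwich_minv_neg_one[OF P Q] posdef_carrier[OF Q]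
    unfolding C_def[symmetric] H_def by (simp add: kit)
  define S Si where "S = Hi * mpow C (t/2)" and "Si = mpow C (-t/2) * H"
  have adj_S: "mat_adjoint S = mpow C (t/2) * Hi"
    unfolding S_def using mat_adjoint_mult[of Hi "mpow C (t/2)"] Hi mpow_carrier[OF C, of "t/2"]
    by (simp add: mpow_hermitian[OF C])
  have adj_Si: "mat_adjoint Si = H * mpow C (-t/2)"
    unfolding Si_def using mat_adjoint_mult[of "mpow C (-t/2)" H] H mpow_carrier[OF C, of "-t/2"]
    by (simp add: mpow_hermitian[OF C])
  have SSi: "S * Si = 1\<^sub>m d" unfolding S_def Si_def H_def Hi_def by (simp add: kit)
  have S: "S \<in> carrier_mat d d" "Si \<in> carrier_mat d d"
    unfolding S_def Si_def using H Hi by (simp_all add: kit)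
  have R: "mpow P (-1/2) * mpow C t * mpow P (-1/2) = S * mat_adjoint S"
    unfolding adj_S unfolding S_def Hi_def by (simp add: kit)
  have SPS: "mat_adjoint S * P * S = mpow C t"
    unfolding adj_S unfolding S_def Hi_def by (subst mpow_one[OF P, symmetric], simp add: kit)
  have SQS: "mat_adjoint S * Q * S = mpow C (t - 1)"
    unfolding adj_S Q_eq unfolding S_def H_def Hi_def by (simp add: kit)
  have SiSi: "Si * mat_adjoint Si = mpow C (-t/2) * P * mpow C (-t/2)"
    unfolding adj_Si unfolding Si_def H_def by (simp add: kit mpow_one[OF P])
  have "gen_fidelity (S * mat_adjoint S) P Q
      = mtrace (mpow C (t/2) * (mpow C (-t/2) * P * mpow C (-t/2)) * mpow C ((t - 1)/2))"
    unfolding gen_fidelity_mult_adjoint[OF P Q S SSi] SPS SQS SiSi msqrt_def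
    by (simp add: mpow_mpow[OF C])
  also have "\<dots> = mtrace (P * mpow C ((t - 1)/2 - t/2))"
    by (simp add: kit)
  also have "(t - 1)/2 - t/2 = -1/2"
    by (simp add: field_simps)
  finally show ?thesis unfolding R .
qed

lemma matsumoto_fidelity_eq:
  assumes P: "posdef d P" and Q: "posdef d Q"
    and C_def: "C = mpow P (1/2) * minv Q * mpow P (1/2)"
  shows "matsumoto_fidelity P Q = mtrace (P * mpow C (-1/2))"
proof -
  have C: "posdef d C" unfolding C_def by (rule posdef_sandwich_minv[OF P Q])
  have "msqrt (mpow P (-1/2) * Q * mpow P (-1/2)) = mpow C (-1/2)"
    unfolding mpow_sandwich_minv_neg_one[OF P Q, folded C_def, symmetric] msqrt_def
    by (simp add: mpow_mpow[OF C])
  then have "matsumoto_fidelity P Q = mtrace (mpow P (1/2) * (mpow P (1/2) * mpow C (-1/2)))"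
    unfolding matsumoto_fidelity_def mgeo_mean_def msqrt_def
    by (subst mtrace_mult_comm[of _ d d],
        simp_all add: mpow_carrier[OF P] mult_carrier_mat[OF mpow_carrier[OF P] mpow_carrier[OF C]])
  also have "\<dots> = mtrace (P * mpow C (-1/2))"
    using mpow_mult_mpow_assoc[OF P mpow_carrier[OF C], of "1/2" "1/2" "-1/2"] by (simp add: mpow_one[OF P])
  finally show ?thesis .
qed

theorem mainTheorem9:
  fixes P Q R :: "complex mat" and d :: nat and t :: real
  assumes "posdef d P" and "posdef d Q"
    and "0 \<le> t" and "t \<le> 1"
    and "R = ai_geodesic (minv P) (minv Q) t"
  shows "gen_fidelity R P Q = matsumoto_fidelity P Q"
proof -
  define C where "C = mpow P (1/2) * minv Q * mpow P (1/2)"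
  have "R = mpow P (-1/2) * mpow C t * mpow P (-1/2)"
    unfolding assms(5) C_def by (rule ai_geodesic_minv[OF assms(1)])
  then show ?thesis
    using gen_fidelity_geodesic[OF assms(1,2) C_def] matsumoto_fidelity_eq[OF assms(1,2) C_def] by simp
qed

end
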